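(* For every $\alpha\in\mathbb{R}$, the sequence $\{k+\alpha\}_{k=0}^{\infty}$ is not a Legendre multiplier sequence.
   Context: The Legendre polynomials $\mathfrak{Le}_n(x)$ are defined by $\frac{1}{\sqrt{1-2xt+t^2}}=\sum_{k=0}^{\infty}\mathfrak{Le}_k(x)t^k$. A real sequence $\{\gamma_k\}_{k=0}^{\infty}$ is a Legendre multiplier sequence if, for every $n$ and all real $a_0,\dots,a_n$, the polynomial $\sum_{k=0}^n a_k\gamma_k\mathfrak{Le}_k(x)$ has only real zeros whenever $\sum_{k=0}^n a_k\mathfrak{Le}_k(x)$ has only real zeros. *)

theory Defs
  imports "HOL-Analysis.Analysis" "HOL-Computational_Algebra.Formal_Power_Series"
begin

text \<open>Legendre polynomials via the generating function
  (1 - 2 x t + t^2)^(-1/2) = sum_k Le_k(x) t^k, taken as a formal power series in t: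
  (1 + u)^(-1/2) composed with u = -2 x t + t^2. Evaluated at complex x so that
  complex zeros can be discussed.\<close>
definition legendre :: "nat \<Rightarrow> complex \<Rightarrow> complex" where
  "legendre k x = fps_nth (fps_compose (fps_binomial (-1/2))
      (fps_const (-2 * x) * fps_X + fps_X ^ 2)) k"

definition only_real_zeros :: "(complex \<Rightarrow> complex) \<Rightarrow> bool" where
  "only_real_zeros f \<longleftrightarrow> (\<forall>z. f z = 0) \<or> (\<forall>z. f z = 0 \<longrightarrow> z \<in> \<real>)"

definition legendre_multiplier_sequence :: "(nat \<Rightarrow> real) \<Rightarrow> bool" where
  "legendre_multiplier_sequence \<gamma> \<longleftrightarrow>
     (\<forall>n (a :: nat \<Rightarrow> real).
        only_real_zeros (\<lambda>x. \<Sum>k\<le>n. of_real (a k) * legendre k x) \<longrightarrow>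
        only_real_zeros (\<lambda>x. \<Sum>k\<le>n. of_real (a k * \<gamma> k) * legendre k x))"

end

theory Submission
  imports Defs
begin

text \<open>Both x^2 and x^4 have only real zeros, and the multiplier k + \<alpha> sends their
  Legendre expansions to (2 + \<alpha>) x^2 - 2/3 and (4 + \<alpha>) x^4 - 12/7 x^2 - 8/35.
  On the imaginary axis these are real-valued and negative at 0; the first becomes positive
  when \<alpha> < -2, the second when \<alpha> \<ge> -2, so one of them vanishes at a non-real point i t.\<close>

lemma fps_nth_const_plus_X_power:
  "fps_nth ((fps_const c + fps_X) ^ n) k = of_nat (n choose k) * (c::'a::comm_ring_1) ^ (n - k)"
proof -
  have "(fps_const c + fps_X) ^ n = (\<Sum>j\<le>n. fps_const (of_nat (n choose j) * c ^ (n - j)) * fps_X ^ j)"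
    by (subst add.commute, subst binomial_ring) (simp add: fps_of_nat[symmetric] mult_ac)
  then show ?thesis
    by (simp add: fps_sum_nth binomial_eq_0 if_distrib[where f = "\<lambda>x. _ * x"] cong: if_cong)
qed

lemma fps_nth_linear_plus_X2_power:
  "fps_nth ((fps_const c * fps_X + fps_X ^ 2) ^ n) k =
     (if k < n then 0 else of_nat (n choose (k - n)) * (c::'a::comm_ring_1) ^ (n - (k - n)))"
proof -
  have "(fps_const c * fps_X + fps_X ^ 2) ^ n = fps_X ^ n * (fps_const c + fps_X) ^ n"
    by (simp add: power2_eq_square power_mult_distrib[symmetric] algebra_simps)
  then show ?thesis by (simp only: fps_X_power_mult_nth fps_nth_const_plus_X_power)
qed

lemma legendre_eq_sum:
  "legendre k x = (\<Sum>i\<le>k. ((-1/2) gchoose i) *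
     (if k < i then 0 else of_nat (i choose (k - i)) * (-2 * x) ^ (i - (k - i))))"
  unfolding legendre_def fps_compose_nth fps_nth_linear_plus_X2_power by (simp add: atLeast0AtMost)

lemma legendre_0: "legendre 0 x = 1"
  and legendre_2: "legendre 2 x = (3 * x^2 - 1) / 2"
  and legendre_4: "legendre 4 x = (35 * x^4 - 30 * x^2 + 3) / 8"
  by (simp_all add: legendre_eq_sum gbinomial_Suc numeral_eq_Suc field_simps)

lemma not_only_real_zeros_imaginary_root:
  assumes "f 0 \<noteq> 0" and "f (\<i> * of_real t) = 0"
  shows "\<not> only_real_zeros f"
proof -
  from assms have "t \<noteq> 0" by auto
  then have "\<i> * of_real t \<notin> \<real>" by (auto simp: complex_is_Real_iff)
  with assms show ?thesis unfolding only_real_zeros_def by blast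
qed

lemma legendre_multiplier_sequenceD:
  assumes "legendre_multiplier_sequence \<gamma>"
    and "\<And>x. (\<Sum>k\<le>n. of_real (a k) * legendre k x) = p x" and "only_real_zeros p"
    and "\<And>x. (\<Sum>k\<le>n. of_real (a k * \<gamma> k) * legendre k x) = q x"
  shows "only_real_zeros q"
proof -
  have "only_real_zeros (\<lambda>x. \<Sum>k\<le>n. of_real (a k) * legendre k x)"
    using assms(2,3) by simp
  with assms(1) have "only_real_zeros (\<lambda>x. \<Sum>k\<le>n. of_real (a k * \<gamma> k) * legendre k x)"
    unfolding legendre_multiplier_sequence_def by blast
  with assms(4) show ?thesis by simp
qed

lemma only_real_zeros_power: "only_real_zeros (\<lambda>x. x ^ n)"
  unfolding only_real_zeros_def by simp

lemma not_legendre_multiplier_sequence_shift_less: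
  assumes "\<alpha> < -2"
  shows "\<not> legendre_multiplier_sequence (\<lambda>k. real k + \<alpha>)"
proof
  define a :: "nat \<Rightarrow> real" where "a k = (if k = 0 then 1/3 else if k = 2 then 2/3 else 0)" for k
  have expand: "(\<Sum>k\<le>2. of_real (a k) * legendre k x) = x ^ 2"
    and image: "(\<Sum>k\<le>2. of_real (a k * (real k + \<alpha>)) * legendre k x) = (2 + of_real \<alpha>) * x ^ 2 - 2/3"
    for x by (simp_all add: a_def atMost_nat_numeral legendre_0 legendre_2 field_simps)
  assume "legendre_multiplier_sequence (\<lambda>k. real k + \<alpha>)"
  then have real_zeros: "only_real_zeros (\<lambda>x. (2 + of_real \<alpha>) * x ^ 2 - 2/3)"
    by (rule legendre_multiplier_sequenceD[OF _ expand only_real_zeros_power image])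
  define t where "t = sqrt (2 / (3 * (-2 - \<alpha>)))"
  have "(2 + of_real \<alpha>) * (\<i> * of_real t) ^ 2 - 2/3 = complex_of_real (- (2 + \<alpha>) * t ^ 2 - 2/3)"
    by (simp add: power_mult_distrib algebra_simps)
  also have "- (2 + \<alpha>) * t ^ 2 - 2/3 = 0"
    using assms by (simp add: t_def field_simps)
  finally have "\<not> only_real_zeros (\<lambda>x. (2 + of_real \<alpha>) * x ^ 2 - 2/3)"
    by (intro not_only_real_zeros_imaginary_root) auto
  with real_zeros show False by contradiction
qed

lemma not_legendre_multiplier_sequence_shift_ge:
  assumes "-2 \<le> \<alpha>"
  shows "\<not> legendre_multiplier_sequence (\<lambda>k. real k + \<alpha>)"
proof
  define a :: "nat \<Rightarrow> real"
    where "a k = (if k = 0 then 1/5 else if k = 2 then 4/7 else if k = 4 then 8/35 else 0)" for k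
  have expand: "(\<Sum>k\<le>4. of_real (a k) * legendre k x) = x ^ 4"
    and image: "(\<Sum>k\<le>4. of_real (a k * (real k + \<alpha>)) * legendre k x)
                  = (4 + of_real \<alpha>) * x ^ 4 - 12/7 * x ^ 2 - 8/35"
    for x by (simp_all add: a_def atMost_nat_numeral legendre_0 legendre_2 legendre_4 field_simps)
  assume "legendre_multiplier_sequence (\<lambda>k. real k + \<alpha>)"
  then have real_zeros: "only_real_zeros (\<lambda>x. (4 + of_real \<alpha>) * x ^ 4 - 12/7 * x ^ 2 - 8/35)"
    by (rule legendre_multiplier_sequenceD[OF _ expand only_real_zeros_power image])
  define g where "g t = (4 + \<alpha>) * t ^ 4 + 12/7 * t ^ 2 - 8/35" for t
  have "\<exists>t\<ge>0. t \<le> 1 \<and> g t = 0"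
    by (rule IVT') (use assms in \<open>auto simp: g_def intro!: continuous_intros\<close>)
  then obtain t where "g t = 0" by blast
  have "(4 + of_real \<alpha>) * (\<i> * of_real t) ^ 4 - 12/7 * (\<i> * of_real t) ^ 2 - 8/35 = complex_of_real (g t)"
    by (simp add: g_def power_mult_distrib)
  also have "g t = 0" by fact
  finally have "\<not> only_real_zeros (\<lambda>x. (4 + of_real \<alpha>) * x ^ 4 - 12/7 * x ^ 2 - 8/35)"
    by (intro not_only_real_zeros_imaginary_root) auto
  with real_zeros show False by contradiction
qed

theorem proposition4p3:
  fixes \<alpha> :: real
  shows "\<not> legendre_multiplier_sequence (\<lambda>k. real k + \<alpha>)"
proof (cases "\<alpha> < -2")
  case True
  then show ?thesis by (rule not_legendre_multiplier_sequence_shift_less)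
next
  case False
  then show ?thesis by (intro not_legendre_multiplier_sequence_shift_ge) simp
qed

end
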